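(* Let $(X_1,T_1,\delta_1,\xi_1,\xi_1\nu_1),\ldots,(X_n,T_n,\delta_n,\xi_n,\xi_n\nu_n)$ be observations from the mixture cure model with partially known cure status described in the context, with distinct observed times, let $K_h(\cdot)=K(\cdot/h)/h$ for a kernel $K$ and bandwidth $h>0$, let $B_{hi}(x)=K_h(x-X_i)/\sum_{j=1}^n K_h(x-X_j)$ be the Nadaraya–Watson weights, let $T_{(1)}<\cdots<T_{(n)}$ be the ordered observed times and let $X_{[i]},\delta_{[i]},\xi_{[i]},\nu_{[i]},B_{h[i]}(x)$ denote the quantities attached to the observation with time $T_{(i)}$. Define $$\widehat S_h^c(t\mid x)=\prod_{i=1}^{n}\left\{1-\frac{\delta_{[i]}B_{h[i]}(x)\mathbf 1(T_{(i)}\le t)}{\sum_{j=i}^{n}B_{h[j]}(x)+\sum_{j=1}^{i-1}B_{h[j]}(x)\mathbf 1(\xi_{[j]}\nu_{[j]}=1)}\right\}$$ and Beran's estimator $$\widehat S_h(t\mid x)=\prod_{i=1}^{n}\left\{1-\frac{\delta_{[i]}B_{h[i]}(x)\mathbf 1(T_{(i)}\le t)}{\sum_{j=i}^{n}B_{h[j]}(x)}\right\}$$ (all denominators assumed nonzero). Then: 1. If $\xi_i\nu_i=0$ for all $i=1,\ldots,n$, then $\widehat S_h^c(t\mid x)=\widehat S_h(t\mid x)$ for all $t$. 2. If there is a fixed known cure threshold $d$ such that, for every $i$, $\xi_i\nu_i=1$ if and only if $T_i\ge d$, then $\widehat S_h^c(t\mid x)=\widehat S_h(t\mid x)$ for all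 $t$. 3. If there is no censoring, i.e. the sample consists of $n_1$ uncured individuals with $\delta_i=1$, $\xi_i\nu_i=0$, $T_i=Y_i<\infty$, and $m=n-n_1$ cured individuals with $Y_i=\infty$, known cure status $\xi_i\nu_i=1$, $\delta_i=0$ and observed times larger than all those of the uncured individuals, then for all finite $t$ below these cured times, $\widehat S_h^c(t\mid x)=\sum_{i=1}^{n}B_{h[i]}(x)\mathbf 1(T_{(i)}>t)$. 4. In the unconditional setting, i.e. with all weights equal to $1/n$, the estimator becomes $\widehat S_n^c(t)=\prod_{i=1}^{n}\left\{1-\frac{\delta_{[i]}\mathbf 1(T_{(i)}\le t)}{n-i+1+\sum_{j=1}^{i-1}\mathbf 1(\xi_{[j]}\nu_{[j]}=1)}\right\}$; and if moreover there is a fixed known $d$ such that an individual is known to be cured if and only if its observed time is at least $d$, then $\widehat S_n^c(t)=\prod_{i=1}^{n}\left\{1-\frac{\delta_{[i]}\mathbf 1(T_{(i)}\le t)}{n-i+1}\right\}$ (the generalized maximum likelihood estimator of Laska and Meisner).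
   Context: Mixture cure model: $Y\in(0,\infty]$ is the survival time, with $Y=\infty$ meaning the subject is cured; $\nu=\mathbf 1(Y=\infty)$ is the cure indicator; $C$ is a censoring time; $X$ is a real covariate. One observes $T=\min(Y,C)$, $\delta=\mathbf 1(Y\le C)$, an indicator $\xi$ of whether the cure status is known ($\xi=1$ known), and $\xi\nu$. Observed individuals fall into three groups: uncured with observed event ($\delta=1,\xi=1,\xi\nu=0$), censored with unknown cure status ($\delta=0,\xi=0,\xi\nu=0$), censored and known to be cured ($\delta=0,\xi=1,\xi\nu=1$). *)

theory Defs
  imports "HOL-Analysis.Analysis" "HOL-Library.Extended_Real"
begin

text \<open>Y: survival time in (0, infinity] (infinity = cured), C: censoring time,
  T = min(Y, C) observed time, delta = 1(Y <= C), nu = 1(Y = infinity),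
  xi = cure status known. The observed triple (delta, xi, xi nu) falls into one of
  the three groups of the model.\<close>
definition cure_obs :: "ereal \<Rightarrow> real \<Rightarrow> real \<Rightarrow> bool \<Rightarrow> bool \<Rightarrow> bool \<Rightarrow> bool" where
  "cure_obs Y C T \<delta> \<xi> \<nu> \<longleftrightarrow>
     Y > 0 \<and> ereal T = min Y (ereal C) \<and> (\<delta> \<longleftrightarrow> Y \<le> ereal C) \<and> (\<nu> \<longleftrightarrow> Y = \<infinity>) \<and>
     ((\<delta> \<and> \<xi> \<and> \<not> (\<xi> \<and> \<nu>)) \<or> (\<not> \<delta> \<and> \<not> \<xi> \<and> \<not> (\<xi> \<and> \<nu>)) \<or> (\<not> \<delta> \<and> \<xi> \<and> (\<xi> \<and> \<nu>)))"

definition Kh :: "(real \<Rightarrow> real) \<Rightarrow> real \<Rightarrow> real \<Rightarrow> real" where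
  "Kh K h u = K (u / h) / h"

definition NW_weight :: "(real \<Rightarrow> real) \<Rightarrow> real \<Rightarrow> nat \<Rightarrow> (nat \<Rightarrow> real) \<Rightarrow> real \<Rightarrow> nat \<Rightarrow> real" where
  "NW_weight K h n X x i = Kh K h (x - X i) / (\<Sum>j=1..n. Kh K h (x - X j))"

text \<open>Generic product-limit estimator with partially known cure status, for weights w
  attached to observations 1..n; sigma is the sorting permutation, i.e. observation
  sigma i has the i-th smallest time T_(i). So w (sigma i) = B_{h[i]}(x) etc.\<close>
definition Sc_w :: "nat \<Rightarrow> (nat \<Rightarrow> real) \<Rightarrow> (nat \<Rightarrow> real) \<Rightarrow> (nat \<Rightarrow> bool) \<Rightarrow> (nat \<Rightarrow> bool)
    \<Rightarrow> (nat \<Rightarrow> bool) \<Rightarrow> (nat \<Rightarrow> nat) \<Rightarrow> real \<Rightarrow> real" where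
  "Sc_w n w T \<delta> \<xi> \<nu> \<sigma> t =
     (\<Prod>i=1..n. 1 - (of_bool (\<delta> (\<sigma> i)) * w (\<sigma> i) * of_bool (T (\<sigma> i) \<le> t)) /
        ((\<Sum>j=i..n. w (\<sigma> j)) + (\<Sum>j\<in>{1..<i}. w (\<sigma> j) * of_bool (\<xi> (\<sigma> j) \<and> \<nu> (\<sigma> j)))))"

definition Beran_w :: "nat \<Rightarrow> (nat \<Rightarrow> real) \<Rightarrow> (nat \<Rightarrow> real) \<Rightarrow> (nat \<Rightarrow> bool)
    \<Rightarrow> (nat \<Rightarrow> nat) \<Rightarrow> real \<Rightarrow> real" where
  "Beran_w n w T \<delta> \<sigma> t =
     (\<Prod>i=1..n. 1 - (of_bool (\<delta> (\<sigma> i)) * w (\<sigma> i) * of_bool (T (\<sigma> i) \<le> t)) /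
        (\<Sum>j=i..n. w (\<sigma> j)))"

definition Sc_hat where
  "Sc_hat K h n X T \<delta> \<xi> \<nu> \<sigma> x t = Sc_w n (NW_weight K h n X x) T \<delta> \<xi> \<nu> \<sigma> t"

definition Beran_hat where
  "Beran_hat K h n X T \<delta> \<sigma> x t = Beran_w n (NW_weight K h n X x) T \<delta> \<sigma> t"

end

theory Submission
  imports Defs
begin

(* In the i-th factor the extra known-cure term (the weight of the known cures ranked before i)
   only matters when delta_[i] = 1, every other factor being 1. So whenever every known cure ranks
   after every observed event -- no known cures, cures known exactly beyond a threshold (known cures
   are censored, hence lie beyond every event), or no censoring at all -- the estimator is Beran's.
   Without censoring up to t, Beran's product telescopes, because
   1 - w_i / (w_i + ... + w_n) = (w_(i+1) + ... + w_n) / (w_i + ... + w_n),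
   which leaves the weight beyond t. Both estimators are invariant under rescaling the weights,
   which gives the unconditional forms. *)

definition known_cures_after_events ::
    "nat \<Rightarrow> (nat \<Rightarrow> bool) \<Rightarrow> (nat \<Rightarrow> bool) \<Rightarrow> (nat \<Rightarrow> bool) \<Rightarrow> (nat \<Rightarrow> nat) \<Rightarrow> bool" where
  "known_cures_after_events n \<delta> \<xi> \<nu> \<sigma> \<longleftrightarrow>
     (\<forall>i\<in>{1..n}. \<forall>j\<in>{1..<i}. \<delta> (\<sigma> i) \<longrightarrow> \<not> (\<xi> (\<sigma> j) \<and> \<nu> (\<sigma> j)))"

lemma Sc_w_eq_Beran_w:
  assumes "known_cures_after_events n \<delta> \<xi> \<nu> \<sigma>"
  shows "Sc_w n w T \<delta> \<xi> \<nu> \<sigma> t = Beran_w n w T \<delta> \<sigma> t"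
  unfolding Sc_w_def Beran_w_def
proof (rule prod.cong[OF refl])
  fix i assume i: "i \<in> {1..n}"
  have "\<delta> (\<sigma> i) \<Longrightarrow> (\<Sum>j\<in>{1..<i}. w (\<sigma> j) * of_bool (\<xi> (\<sigma> j) \<and> \<nu> (\<sigma> j))) = 0"
    using assms i unfolding known_cures_after_events_def by (intro sum.neutral) auto
  then show "1 - of_bool (\<delta> (\<sigma> i)) * w (\<sigma> i) * of_bool (T (\<sigma> i) \<le> t) /
      ((\<Sum>j=i..n. w (\<sigma> j)) + (\<Sum>j\<in>{1..<i}. w (\<sigma> j) * of_bool (\<xi> (\<sigma> j) \<and> \<nu> (\<sigma> j))))
    = 1 - of_bool (\<delta> (\<sigma> i)) * w (\<sigma> i) * of_bool (T (\<sigma> i) \<le> t) / (\<Sum>j=i..n. w (\<sigma> j))"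
    by (cases "\<delta> (\<sigma> i)") simp_all
qed

lemma known_cures_after_eventsI:
  fixes T :: "nat \<Rightarrow> 'a::preorder"
  assumes "\<sigma> ` {1..n} \<subseteq> {1..n}" and "mono_on {1..n} (T \<circ> \<sigma>)"
    and "\<forall>i\<in>{1..n}. \<forall>j\<in>{1..n}. \<delta> i \<and> \<xi> j \<and> \<nu> j \<longrightarrow> T i < T j"
  shows "known_cures_after_events n \<delta> \<xi> \<nu> \<sigma>"
  unfolding known_cures_after_events_def
proof (intro ballI impI notI)
  fix i j assume i: "i \<in> {1..n}" and j: "j \<in> {1..<i}"
    and "\<delta> (\<sigma> i)" and "\<xi> (\<sigma> j) \<and> \<nu> (\<sigma> j)"
  moreover have "\<sigma> i \<in> {1..n}" "\<sigma> j \<in> {1..n}" using assms(1) i j by (auto simp: image_subset_iff)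
  ultimately have "T (\<sigma> i) < T (\<sigma> j)" using assms(3) by blast
  moreover have "T (\<sigma> j) \<le> T (\<sigma> i)"
    using mono_onD[OF assms(2), of j i] i j by auto
  ultimately show False by (meson less_le_trans less_irrefl)
qed

lemma known_cures_after_events_threshold:
  fixes T :: "nat \<Rightarrow> 'a::linorder"
  assumes "\<sigma> ` {1..n} \<subseteq> {1..n}" and "mono_on {1..n} (T \<circ> \<sigma>)"
    and "\<forall>i\<in>{1..n}. \<xi> i \<and> \<nu> i \<longrightarrow> \<not> \<delta> i"
    and "\<forall>i\<in>{1..n}. (\<xi> i \<and> \<nu> i) \<longleftrightarrow> d \<le> T i"
  shows "known_cures_after_events n \<delta> \<xi> \<nu> \<sigma>"
proof (rule known_cures_after_eventsI[OF assms(1,2)], intro ballI impI)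
  fix i j assume "i \<in> {1..n}" "j \<in> {1..n}" "\<delta> i \<and> \<xi> j \<and> \<nu> j"
  then have "T i < d" "d \<le> T j" using assms(3,4) by (auto simp: not_le[symmetric])
  then show "T i < T j" by simp
qed

lemma sum_times_prod_one_minus_div_tail_sum:
  fixes w :: "nat \<Rightarrow> 'a::field"
  assumes "m \<le> n" and "\<forall>i\<in>{1..m}. (\<Sum>j=i..n. w j) \<noteq> 0"
  shows "(\<Sum>j=1..n. w j) * (\<Prod>i=1..m. 1 - w i / (\<Sum>j=i..n. w j)) = (\<Sum>j=Suc m..n. w j)"
  using assms
proof (induction m)
  case 0
  then show ?case by simp
next
  case (Suc m)
  have tail: "(\<Sum>j=Suc m..n. w j) = w (Suc m) + (\<Sum>j=Suc (Suc m)..n. w j)"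
    using Suc.prems(1) by (simp add: sum.atLeast_Suc_atMost)
  have "(\<Sum>j=Suc m..n. w j) \<noteq> 0" using Suc.prems by simp
  then have "(\<Sum>j=Suc m..n. w j) * (1 - w (Suc m) / (\<Sum>j=Suc m..n. w j)) = (\<Sum>j=Suc (Suc m)..n. w j)"
    by (simp add: right_diff_distrib tail)
  with Suc show ?case by (simp add: prod.nat_ivl_Suc' mult.assoc[symmetric])
qed

lemma mono_on_le_iff_prefix:
  fixes f :: "nat \<Rightarrow> 'a::linorder"
  assumes "mono_on {1..n} f"
  obtains m where "m \<le> n" and "\<And>i. i \<in> {1..n} \<Longrightarrow> f i \<le> t \<longleftrightarrow> i \<le> m"
proof -
  define m where "m = Max (insert 0 {i\<in>{1..n}. f i \<le> t})"
  have "m \<le> n" unfolding m_def by (simp add: Max_le_iff)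
  moreover have "f i \<le> t \<longleftrightarrow> i \<le> m" if i: "i \<in> {1..n}" for i
  proof
    assume "f i \<le> t" then show "i \<le> m" using i unfolding m_def by (intro Max_ge) auto
  next
    assume "i \<le> m"
    moreover have "m \<in> insert 0 {i\<in>{1..n}. f i \<le> t}" unfolding m_def by (intro Max_in) auto
    ultimately have "m \<in> {1..n}" "f m \<le> t" using i by auto
    with \<open>i \<le> m\<close> i show "f i \<le> t" using mono_onD[OF assms, of i m] by simp
  qed
  ultimately show thesis using that by blast
qed

lemma Beran_w_no_censoring_before:
  assumes "mono_on {1..n} (T \<circ> \<sigma>)"
    and "\<forall>i\<in>{1..n}. T (\<sigma> i) \<le> t \<longrightarrow> \<delta> (\<sigma> i)"
    and "\<forall>i\<in>{1..n}. (\<Sum>j=i..n. w (\<sigma> j)) \<noteq> 0"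
  shows "(\<Sum>j=1..n. w (\<sigma> j)) * Beran_w n w T \<delta> \<sigma> t = (\<Sum>i=1..n. w (\<sigma> i) * of_bool (t < T (\<sigma> i)))"
proof -
  obtain m where "m \<le> n" and prefix: "\<And>i. i \<in> {1..n} \<Longrightarrow> T (\<sigma> i) \<le> t \<longleftrightarrow> i \<le> m"
    using mono_on_le_iff_prefix[OF assms(1)] by (metis comp_apply)
  have "Beran_w n w T \<delta> \<sigma> t = (\<Prod>i\<in>{1..n}. if i \<in> {..m} then 1 - w (\<sigma> i) / (\<Sum>j=i..n. w (\<sigma> j)) else 1)"
    unfolding Beran_w_def using assms(2) prefix by (intro prod.cong) auto
  also have "\<dots> = (\<Prod>i\<in>{1..n} \<inter> {..m}. 1 - w (\<sigma> i) / (\<Sum>j=i..n. w (\<sigma> j)))"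
    by (simp only: prod.inter_restrict[OF finite_atLeastAtMost])
  also have "{1..n} \<inter> {..m} = {1..m}" using \<open>m \<le> n\<close> by auto
  finally have "(\<Sum>j=1..n. w (\<sigma> j)) * Beran_w n w T \<delta> \<sigma> t = (\<Sum>j=Suc m..n. w (\<sigma> j))"
    using sum_times_prod_one_minus_div_tail_sum[of m n "\<lambda>j. w (\<sigma> j)"] \<open>m \<le> n\<close> assms(3) by simp
  also have "\<dots> = (\<Sum>i\<in>{1..n} \<inter> {Suc m..n}. w (\<sigma> i))"
    by (simp add: Int_absorb1)
  also have "\<dots> = (\<Sum>i=1..n. w (\<sigma> i) * of_bool (t < T (\<sigma> i)))"
    unfolding sum.inter_restrict[OF finite_atLeastAtMost] using prefix by (intro sum.cong) (auto simp: not_le[symmetric])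
  finally show ?thesis .
qed

lemma Sc_w_no_censoring:
  assumes "\<sigma> ` {1..n} \<subseteq> {1..n}" and "mono_on {1..n} (T \<circ> \<sigma>)"
    and "\<forall>i\<in>{1..n}. \<delta> i \<or> (\<xi> i \<and> \<nu> i)"
    and "\<forall>i\<in>{1..n}. \<forall>j\<in>{1..n}. \<delta> i \<and> \<xi> j \<and> \<nu> j \<longrightarrow> T i < T j"
    and "\<forall>j\<in>{1..n}. \<xi> j \<and> \<nu> j \<longrightarrow> t < T j"
    and "\<forall>i\<in>{1..n}. (\<Sum>j=i..n. w (\<sigma> j)) \<noteq> 0"
  shows "(\<Sum>j=1..n. w (\<sigma> j)) * Sc_w n w T \<delta> \<xi> \<nu> \<sigma> t = (\<Sum>i=1..n. w (\<sigma> i) * of_bool (t < T (\<sigma> i)))"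
proof -
  have "\<forall>i\<in>{1..n}. T (\<sigma> i) \<le> t \<longrightarrow> \<delta> (\<sigma> i)"
    using assms(1,3,5) by (fastforce simp: image_subset_iff)
  then show ?thesis
    using Sc_w_eq_Beran_w[OF known_cures_after_eventsI[OF assms(1,2,4)]]
      Beran_w_no_censoring_before[OF assms(2) _ assms(6)] by simp
qed

lemma Sc_w_scale:
  assumes "c \<noteq> 0"
  shows "Sc_w n (\<lambda>j. c * w j) T \<delta> \<xi> \<nu> \<sigma> t = Sc_w n w T \<delta> \<xi> \<nu> \<sigma> t"
  unfolding Sc_w_def
proof (rule prod.cong[OF refl])
  fix i
  let ?b = "\<lambda>j. of_bool (\<xi> (\<sigma> j) \<and> \<nu> (\<sigma> j)) :: real"
  have "of_bool (\<delta> (\<sigma> i)) * (c * w (\<sigma> i)) * of_bool (T (\<sigma> i) \<le> t)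
      = c * (of_bool (\<delta> (\<sigma> i)) * w (\<sigma> i) * of_bool (T (\<sigma> i) \<le> t))"
    by simp
  moreover have "(\<Sum>j=i..n. c * w (\<sigma> j)) + (\<Sum>j\<in>{1..<i}. c * w (\<sigma> j) * ?b j)
      = c * ((\<Sum>j=i..n. w (\<sigma> j)) + (\<Sum>j\<in>{1..<i}. w (\<sigma> j) * ?b j))"
    by (simp only: sum_distrib_left distrib_left mult.assoc)
  ultimately show "1 - of_bool (\<delta> (\<sigma> i)) * (c * w (\<sigma> i)) * of_bool (T (\<sigma> i) \<le> t) /
        ((\<Sum>j=i..n. c * w (\<sigma> j)) + (\<Sum>j\<in>{1..<i}. c * w (\<sigma> j) * ?b j))
      = 1 - of_bool (\<delta> (\<sigma> i)) * w (\<sigma> i) * of_bool (T (\<sigma> i) \<le> t) /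
        ((\<Sum>j=i..n. w (\<sigma> j)) + (\<Sum>j\<in>{1..<i}. w (\<sigma> j) * ?b j))"
    using assms by simp
qed

lemma Beran_w_scale:
  assumes "c \<noteq> 0"
  shows "Beran_w n (\<lambda>j. c * w j) T \<delta> \<sigma> t = Beran_w n w T \<delta> \<sigma> t"
  unfolding Beran_w_def using assms
  by (simp add: mult.assoc mult.left_commute[of c] sum_distrib_left[symmetric])

lemma Sc_w_uniform:
  "Sc_w n (\<lambda>_. 1 / real n) T \<delta> \<xi> \<nu> \<sigma> t
     = (\<Prod>i=1..n. 1 - of_bool (\<delta> (\<sigma> i)) * of_bool (T (\<sigma> i) \<le> t) /
          (real (n - i + 1) + (\<Sum>j\<in>{1..<i}. of_bool (\<xi> (\<sigma> j) \<and> \<nu> (\<sigma> j)))))"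
    (is "_ = ?rhs")
proof (cases "n = 0")
  case False
  then have "Sc_w n (\<lambda>_. 1 / real n) T \<delta> \<xi> \<nu> \<sigma> t = Sc_w n (\<lambda>_. 1) T \<delta> \<xi> \<nu> \<sigma> t"
    using Sc_w_scale[of "1 / real n" n "\<lambda>_. 1"] by simp
  also have "\<dots> = ?rhs" unfolding Sc_w_def by (intro prod.cong) auto
  finally show ?thesis .
qed (simp add: Sc_w_def)

lemma Beran_w_uniform:
  "Beran_w n (\<lambda>_. 1 / real n) T \<delta> \<sigma> t
     = (\<Prod>i=1..n. 1 - of_bool (\<delta> (\<sigma> i)) * of_bool (T (\<sigma> i) \<le> t) / real (n - i + 1))"
    (is "_ = ?rhs")
proof (cases "n = 0")
  case False
  then have "Beran_w n (\<lambda>_. 1 / real n) T \<delta> \<sigma> t = Beran_w n (\<lambda>_. 1) T \<delta> \<sigma> t"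
    using Beran_w_scale[of "1 / real n" n "\<lambda>_. 1"] by simp
  also have "\<dots> = ?rhs" unfolding Beran_w_def by (intro prod.cong) auto
  finally show ?thesis .
qed (simp add: Beran_w_def)

lemma sum_NW_weight:
  assumes "(\<Sum>j=1..n. Kh K h (x - X j)) \<noteq> 0"
  shows "(\<Sum>j=1..n. NW_weight K h n X x j) = 1"
  using assms unfolding NW_weight_def by (simp add: sum_divide_distrib[symmetric])

theorem proposition1:
  fixes n :: nat and X :: "nat \<Rightarrow> real" and Y :: "nat \<Rightarrow> ereal" and C T :: "nat \<Rightarrow> real"
    and \<delta> \<xi> \<nu> :: "nat \<Rightarrow> bool" and \<sigma> :: "nat \<Rightarrow> nat"
    and K :: "real \<Rightarrow> real" and h x :: real
  assumes model: "\<forall>i\<in>{1..n}. cure_obs (Y i) (C i) (T i) (\<delta> i) (\<xi> i) (\<nu> i)"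
    and distinct_times: "inj_on T {1..n}"
    and sort_perm: "bij_betw \<sigma> {1..n} {1..n}"
    and sorted: "strict_mono_on {1..n} (T \<circ> \<sigma>)"
    and h_pos: "h > 0"
    and nonzero_NW: "(\<Sum>j=1..n. Kh K h (x - X j)) \<noteq> 0"
    and nonzero_Beran: "\<forall>i\<in>{1..n}. (\<Sum>j=i..n. NW_weight K h n X x (\<sigma> j)) \<noteq> 0"
    and nonzero_Sc: "\<forall>i\<in>{1..n}. (\<Sum>j=i..n. NW_weight K h n X x (\<sigma> j))
          + (\<Sum>j\<in>{1..<i}. NW_weight K h n X x (\<sigma> j) * of_bool (\<xi> (\<sigma> j) \<and> \<nu> (\<sigma> j))) \<noteq> 0"
  shows
    \<comment> \<open>1. no individual known to be cured\<close>
    "((\<forall>i\<in>{1..n}. \<not> (\<xi> i \<and> \<nu> i)) \<longrightarrow>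
        (\<forall>t. Sc_hat K h n X T \<delta> \<xi> \<nu> \<sigma> x t = Beran_hat K h n X T \<delta> \<sigma> x t))
   \<and>
    \<comment> \<open>2. known cure threshold d\<close>
    (\<forall>d::real. (\<forall>i\<in>{1..n}. (\<xi> i \<and> \<nu> i) \<longleftrightarrow> T i \<ge> d) \<longrightarrow>
        (\<forall>t. Sc_hat K h n X T \<delta> \<xi> \<nu> \<sigma> x t = Beran_hat K h n X T \<delta> \<sigma> x t))
   \<and>
    \<comment> \<open>3. no censoring: uncured observed, cured known and later than all uncured\<close>
    ((\<forall>i\<in>{1..n}. (\<delta> i \<and> \<not> (\<xi> i \<and> \<nu> i) \<and> Y i < \<infinity> \<and> ereal (T i) = Y i)
                 \<or> (Y i = \<infinity> \<and> (\<xi> i \<and> \<nu> i) \<and> \<not> \<delta> i))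
      \<and> (\<forall>i\<in>{1..n}. \<forall>j\<in>{1..n}. \<delta> i \<and> Y j = \<infinity> \<longrightarrow> T i < T j)
     \<longrightarrow> (\<forall>t::real. (\<forall>j\<in>{1..n}. Y j = \<infinity> \<longrightarrow> t < T j) \<longrightarrow>
           Sc_hat K h n X T \<delta> \<xi> \<nu> \<sigma> x t
             = (\<Sum>i=1..n. NW_weight K h n X x (\<sigma> i) * of_bool (T (\<sigma> i) > t))))
   \<and>
    \<comment> \<open>4. unconditional setting: all weights 1/n\<close>
    (\<forall>t. Sc_w n (\<lambda>_. 1 / real n) T \<delta> \<xi> \<nu> \<sigma> t
        = (\<Prod>i=1..n. 1 - of_bool (\<delta> (\<sigma> i)) * of_bool (T (\<sigma> i) \<le> t) /
             (real (n - i + 1) + (\<Sum>j\<in>{1..<i}. of_bool (\<xi> (\<sigma> j) \<and> \<nu> (\<sigma> j))))))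
   \<and>
    (\<forall>d::real. (\<forall>i\<in>{1..n}. (\<xi> i \<and> \<nu> i) \<longleftrightarrow> T i \<ge> d) \<longrightarrow>
        (\<forall>t. Sc_w n (\<lambda>_. 1 / real n) T \<delta> \<xi> \<nu> \<sigma> t
            = (\<Prod>i=1..n. 1 - of_bool (\<delta> (\<sigma> i)) * of_bool (T (\<sigma> i) \<le> t) / real (n - i + 1))))"
proof -
  have \<sigma>_into: "\<sigma> ` {1..n} \<subseteq> {1..n}" using sort_perm by (simp add: bij_betw_def)
  have mono: "mono_on {1..n} (T \<circ> \<sigma>)" using sorted by (rule strict_mono_on_imp_mono_on)
  have cured_censored: "\<forall>i\<in>{1..n}. \<xi> i \<and> \<nu> i \<longrightarrow> \<not> \<delta> i"
    using model unfolding cure_obs_def by blast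
  note after_if_threshold = known_cures_after_events_threshold[OF \<sigma>_into mono cured_censored]
  show ?thesis
    unfolding Sc_hat_def Beran_hat_def
  proof (intro conjI allI impI Sc_w_uniform Sc_w_eq_Beran_w, goal_cases)
    case 1
    then show ?case by (intro known_cures_after_eventsI[OF \<sigma>_into mono]) blast
  next
    case (2 d)
    then show ?case by (rule after_if_threshold)
  next
    case (3 t)
    then have "\<forall>i\<in>{1..n}. \<delta> i \<or> (\<xi> i \<and> \<nu> i)"
      and "\<forall>i\<in>{1..n}. \<forall>j\<in>{1..n}. \<delta> i \<and> \<xi> j \<and> \<nu> j \<longrightarrow> T i < T j"
      and "\<forall>j\<in>{1..n}. \<xi> j \<and> \<nu> j \<longrightarrow> t < T j"
      by auto
    moreover have "(\<Sum>j=1..n. NW_weight K h n X x (\<sigma> j)) = 1"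
      using sum.reindex_bij_betw[OF sort_perm, of "NW_weight K h n X x"] sum_NW_weight[OF nonzero_NW] by simp
    ultimately show ?case
      using Sc_w_no_censoring[OF \<sigma>_into mono _ _ _ nonzero_Beran] by simp
  next
    case (4 d t)
    then have "known_cures_after_events n \<delta> \<xi> \<nu> \<sigma>" by (rule after_if_threshold)
    then show ?case by (simp only: Sc_w_eq_Beran_w Beran_w_uniform)
  qed
qed

end
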